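(* Let $h$ be the $11$-uniform morphism on $\{0,1,2,3\}$ given by $h(0)=01312021310$, $h(1)=12023132021$, $h(2)=23130203132$, $h(3)=30201310203$. Every factor of the infinite fixed point $h^\omega(0)$ that is a $\tfrac32$-power (i.e., of length $p$ with period $q$ where $p/q=3/2$) has length $a\cdot 11^i$ for some $a\in\{3,6,9,12\}$ and integer $i\ge0$.
   Context: A word $x=x[1..n]$ has period $q$ if $x[i]=x[i+q]$ for $1\le i\le n-q$. For integers $p>q\ge1$, $x$ is a $(p/q)$-power if it has length $p$ and period $q$. *)

theory Defs
  imports Main
begin

fun h_letter :: "nat \<Rightarrow> nat list" where
  "h_letter a =
     (if a = 0 then [0,1,3,1,2,0,2,1,3,1,0]
      else if a = 1 then [1,2,0,2,3,1,3,2,0,2,1]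
      else if a = 2 then [2,3,1,3,0,2,0,3,1,3,2]
      else [3,0,2,0,1,3,1,0,2,0,3])"

definition h_word :: "nat list \<Rightarrow> nat list" where
  "h_word w = concat (map h_letter w)"

text \<open>The infinite fixed point h^omega(0), as a function from positions
  (0-based) to letters: its n-th letter is the n-th letter of h^(n+1)(0),
  a word of length 11^(n+1) > n; the words h^k(0) are successive prefixes.\<close>
definition h_fix :: "nat \<Rightarrow> nat" where
  "h_fix n = ((h_word ^^ (Suc n)) [0]) ! n"

definition factor_has_period :: "(nat \<Rightarrow> 'a) \<Rightarrow> nat \<Rightarrow> nat \<Rightarrow> nat \<Rightarrow> bool" where
  "factor_has_period x i p q \<longleftrightarrow> (\<forall>j. j + q < p \<longrightarrow> x (i + j) = x (i + j + q))"

end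

theory Submission
  imports Defs "HOL-Library.Sublist"
begin

text \<open>Write x for the fixed point. The morphism commutes with the cyclic permutation
  a \<mapsto> a + 1 (mod 4) of the alphabet, so a window of x spanning two or three consecutive blocks
  h(x(t)) h(x(t+1)) ... is, up to such a rotation, one of finitely many words. An exhaustive
  check over them shows that six consecutive letters of x determine the position of the block
  boundaries. Hence a factor x[i..i+3m) of period 2m with m \<ge> 6 has 11 | 2m, so 11 | m, and
  its block-aligned part desubstitutes to a factor of length 3m/11 and period 2m/11. Iterating,
  m = a \<cdot> 11^k with a \<le> 5, and a second exhaustive check rules out a = 5.\<close>

declare h_letter.simps [simp del]

lemma h_word_Nil [simp]: "h_word [] = []"
  by (simp add: h_word_def)

lemma h_word_Cons [simp]: "h_word (a # w) = h_letter a @ h_word w"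
  by (simp add: h_word_def)

lemma h_word_append: "h_word (u @ v) = h_word u @ h_word v"
  by (simp add: h_word_def)

lemma length_h_letter [simp]: "length (h_letter a) = 11"
  by (simp add: h_letter.simps)

lemma length_h_word [simp]: "length (h_word w) = 11 * length w"
  by (induction w) auto

lemma nth_h_word:
  assumes "t < length w" and "j < 11"
  shows "h_word w ! (11 * t + j) = h_letter (w ! t) ! j"
  using assms
proof (induction w arbitrary: t)
  case (Cons a w)
  then show ?case
    by (cases t) (auto simp: nth_append)
qed simp

lemma h_word_less_4: "x \<in> set (h_word w) \<Longrightarrow> x < 4"
  by (induction w) (auto simp: h_letter.simps split: if_splits)

lemma prefix_h_word: "prefix u v \<Longrightarrow> prefix (h_word u) (h_word v)"
  by (auto simp: prefix_def h_word_append)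

lemma h_letter_rotate_0:
  assumes "a < 4"
  shows "h_letter a = map (\<lambda>x. (a + x) mod 4) (h_letter 0)"
proof -
  have "a \<in> {0, 1, 2, 3}"
    using assms by auto
  then show ?thesis
    by (elim insertE emptyE) (simp_all add: h_letter.simps)
qed

lemma h_letter_rotate:
  assumes "b < 4"
  shows "h_letter ((a + b) mod 4) = map (\<lambda>x. (a + x) mod 4) (h_letter b)"
proof -
  have "h_letter ((a + b) mod 4) = map (\<lambda>x. ((a + b) mod 4 + x) mod 4) (h_letter 0)"
    by (rule h_letter_rotate_0) simp
  also have "\<dots> = map (\<lambda>x. (a + (b + x) mod 4) mod 4) (h_letter 0)"
    by (simp add: mod_add_left_eq mod_add_right_eq add.assoc)
  also have "\<dots> = map (\<lambda>x. (a + x) mod 4) (h_letter b)"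
    using h_letter_rotate_0[OF assms] by simp
  finally show ?thesis .
qed

lemma h_word_rotate:
  assumes "set w \<subseteq> {..<4}"
  shows "h_word (map (\<lambda>x. (a + x) mod 4) w) = map (\<lambda>x. (a + x) mod 4) (h_word w)"
  using assms by (induction w) (auto simp: h_letter_rotate)

lemma less_11_power: "n < 11 ^ n"
proof -
  have "n < 2 ^ n"
    by (rule less_exp)
  also have "(2::nat) ^ n \<le> 11 ^ n"
    by (rule power_mono) auto
  finally show ?thesis .
qed

lemma length_h_iterate: "length ((h_word ^^ k) [0]) = 11 ^ k"
  by (induction k) auto

lemma prefix_h_iterate:
  assumes "k \<le> l"
  shows "prefix ((h_word ^^ k) [0]) ((h_word ^^ l) [0])"
  using assms
proof (induction rule: dec_induct)
  case (step l)
  have "prefix ((h_word ^^ l) [0]) ((h_word ^^ Suc l) [0])"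
  proof (induction l)
    case 0
    then show ?case by (simp add: h_letter.simps)
  next
    case (Suc l)
    then show ?case by (simp add: prefix_h_word)
  qed
  with step.IH show ?case
    by (rule prefix_order.trans)
qed simp

lemma h_fix_eq_nth_h_iterate:
  assumes "n < 11 ^ k"
  shows "h_fix n = (h_word ^^ k) [0] ! n"
proof -
  define l where "l = max k (Suc n)"
  obtain u where u: "(h_word ^^ l) [0] = (h_word ^^ Suc n) [0] @ u"
    using prefix_h_iterate[of "Suc n" l] by (auto simp: l_def prefix_def)
  obtain v where v: "(h_word ^^ l) [0] = (h_word ^^ k) [0] @ v"
    using prefix_h_iterate[of k l] by (auto simp: l_def prefix_def)
  have "n < length ((h_word ^^ Suc n) [0])"
    using less_11_power[of n] by (simp add: length_h_iterate del: funpow.simps)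
  then have "h_fix n = (h_word ^^ l) [0] ! n"
    by (simp add: h_fix_def u nth_append del: funpow.simps)
  also have "\<dots> = (h_word ^^ k) [0] ! n"
    using assms by (simp add: v nth_append length_h_iterate)
  finally show ?thesis .
qed

lemma h_fix_less_4: "h_fix n < 4"
proof -
  have "n < length (h_word ((h_word ^^ n) [0]))"
    using less_11_power[of n] by (simp add: length_h_iterate)
  then have "h_fix n \<in> set (h_word ((h_word ^^ n) [0]))"
    by (simp add: h_fix_def)
  then show ?thesis
    by (rule h_word_less_4)
qed

lemma h_fix_mult_11_add:
  assumes "j < 11"
  shows "h_fix (11 * t + j) = h_letter (h_fix t) ! j"
proof -
  let ?w = "(h_word ^^ Suc t) [0]"
  have t: "t < 11 ^ Suc t"
    using less_11_power[of t] by simp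
  then have "11 * t + j < 11 ^ Suc (Suc t)"
    using assms by simp
  then have "h_fix (11 * t + j) = h_word ?w ! (11 * t + j)"
    by (subst h_fix_eq_nth_h_iterate[of _ "Suc (Suc t)"]) simp_all
  also have "\<dots> = h_letter (?w ! t) ! j"
    using t assms by (simp add: nth_h_word length_h_iterate del: funpow.simps)
  also have "?w ! t = h_fix t"
    using h_fix_eq_nth_h_iterate[OF t] by simp
  finally show ?thesis .
qed

lemma h_fix_mult_11: "h_fix (11 * t) = h_fix t"
proof -
  have "h_fix (11 * t) = h_letter (h_fix t) ! 0"
    using h_fix_mult_11_add[of 0 t] by simp
  also have "\<dots> = h_fix t"
    using h_fix_less_4[of t] by (simp add: h_letter_rotate_0[OF h_fix_less_4] h_letter.simps[of 0])
  finally show ?thesis .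
qed

lemma h_fix_eq_nth_h_word_window:
  assumes "u < 11 * n"
  shows "h_fix (11 * t + u) = h_word (map (\<lambda>s. h_fix (t + s)) [0..<n]) ! u"
proof -
  have block: "u div 11 < n"
    using assms by (simp add: less_mult_imp_div_less)
  have "h_fix (11 * t + u) = h_fix (11 * (t + u div 11) + u mod 11)"
    by (simp add: algebra_simps)
  also have "\<dots> = h_letter (h_fix (t + u div 11)) ! (u mod 11)"
    by (rule h_fix_mult_11_add) simp
  also have "\<dots> = h_word (map (\<lambda>s. h_fix (t + s)) [0..<n]) ! (11 * (u div 11) + u mod 11)"
    using nth_h_word[of "u div 11" "map (\<lambda>s. h_fix (t + s)) [0..<n]" "u mod 11"] block by simp
  finally show ?thesis
    by simp
qed

lemma h_fix_eq_rotated_nth_h_word_pair: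
  assumes "u < 22"
  shows "h_fix (11 * t + u) = (h_fix t + h_word [0, (h_fix (t + 1) + 4 - h_fix t) mod 4] ! u) mod 4"
proof -
  define d where "d = (h_fix (t + 1) + 4 - h_fix t) mod 4"
  let ?rot = "\<lambda>x. (h_fix t + x) mod 4"
  have "?rot d = h_fix (t + 1)"
    using h_fix_less_4[of t] h_fix_less_4[of "t + 1"] by (simp add: d_def mod_add_right_eq)
  then have "map (\<lambda>s. h_fix (t + s)) [0..<2] = map ?rot [0, d]"
    using h_fix_less_4[of t] by (simp add: upt_rec)
  moreover have "h_word (map ?rot [0, d]) = map ?rot (h_word [0, d])"
    by (rule h_word_rotate) (simp add: d_def)
  ultimately have "h_fix (11 * t + u) = map ?rot (h_word [0, d]) ! u"
    using h_fix_eq_nth_h_word_window[of u 2 t] assms by simp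
  then show ?thesis
    using assms by (simp add: d_def del: h_word_Cons)
qed

section \<open>Exhaustive checks on images of short words\<close>

text \<open>The equalities (W!(p+k) + W'!p') mod 4 = (W'!(p'+k) + W!p) mod 4 for all k < 6 say that
  the six-letter windows of W at p and of W' at p' agree up to a rotation of the alphabet.
  In both checks the words are enumerated once as a list, so that code_simp evaluates each
  image of h only once instead of under every binder.\<close>

lemma rotated_windows_of_h_word_pairs_differ:
  assumes "b < 4" and "b' < 4" and "p < 11" and "p' < 11" and "p \<noteq> p'"
  shows "\<exists>k<6. (h_word [0, b] ! (p + k) + h_word [0, b'] ! p') mod 4
                \<noteq> (h_word [0, b'] ! (p' + k) + h_word [0, b] ! p) mod 4"
proof -
  let ?W = "[h_word [0, b]. b \<leftarrow> [0..<4]]"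
  have "list_all (\<lambda>W. list_all (\<lambda>W'. list_all (\<lambda>p. list_all (\<lambda>p'. p = p' \<or>
      list_ex (\<lambda>k. (W ! (p + k) + W' ! p') mod 4 \<noteq> (W' ! (p' + k) + W ! p) mod 4) [0..<6])
      [0..<11]) [0..<11]) ?W) ?W"
    by code_simp
  then have check: "\<forall>W\<in>set ?W. \<forall>W'\<in>set ?W. \<forall>p\<in>set [0..<11]. \<forall>p'\<in>set [0..<11]. p = p' \<or>
      (\<exists>k\<in>set [0..<6]. (W ! (p + k) + W' ! p') mod 4 \<noteq> (W' ! (p' + k) + W ! p) mod 4)"
    by (simp only: list_all_iff list_ex_iff)
  have "h_word [0, b] \<in> set ?W" "h_word [0, b'] \<in> set ?W" "p \<in> set [0..<11]" "p' \<in> set [0..<11]"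
    using assms by (simp_all del: h_word_Cons)
  from check[rule_format, OF this] show ?thesis
    using assms(5) by (auto simp del: h_word_Cons)
qed

lemma h_word_triple_no_three_halves_power_15:
  assumes "a < 4" and "b < 4" and "c < 4" and "p < 11"
  shows "\<exists>k<5. h_word [a, b, c] ! (p + k) \<noteq> h_word [a, b, c] ! (p + 10 + k)"
proof -
  let ?W = "[h_word [a, b, c]. a \<leftarrow> [0..<4], b \<leftarrow> [0..<4], c \<leftarrow> [0..<4]]"
  have "list_all (\<lambda>W. list_all (\<lambda>p. list_ex (\<lambda>k. W ! (p + k) \<noteq> W ! (p + 10 + k)) [0..<5])
      [0..<11]) ?W"
    by code_simp
  then have check: "\<forall>W\<in>set ?W. \<forall>p\<in>set [0..<11]. \<exists>k\<in>set [0..<5]. W ! (p + k) \<noteq> W ! (p + 10 + k)"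
    by (simp only: list_all_iff list_ex_iff)
  have "h_word [a, b, c] \<in> set ?W" "p \<in> set [0..<11]"
    using assms by (simp_all del: h_word_Cons add: image_iff) force
  from check[rule_format, OF this] show ?thesis
    by (auto simp del: h_word_Cons)
qed

section \<open>Synchronization and desubstitution\<close>

lemma mod_add_left_cancel_nat:
  fixes n :: nat
  assumes "(c + x) mod n = (c + y) mod n"
  shows "x mod n = y mod n"
  using assms by (simp add: nat_mod_eq_iff)

lemma mod_add_cross:
  fixes n :: nat
  assumes "(a + x) mod n = (b + y) mod n" and "(a + x') mod n = (b + y') mod n"
  shows "(x + y') mod n = (y + x') mod n"
proof (rule mod_add_left_cancel_nat)
  have "(a + b + (x + y')) mod n = ((a + x) + (b + y')) mod n"
    by (simp add: ac_simps)
  also have "\<dots> = ((b + y) + (a + x')) mod n"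
    using mod_add_cong[OF assms(1) assms(2)[symmetric]] .
  also have "\<dots> = (a + b + (y + x')) mod n"
    by (simp add: ac_simps)
  finally show "(a + b + (x + y')) mod n = (a + b + (y + x')) mod n" .
qed

lemma h_fix_synchronizing:
  assumes "\<forall>k<6. h_fix (i + k) = h_fix (j + k)"
  shows "i mod 11 = j mod 11"
proof (rule ccontr)
  assume offsets: "i mod 11 \<noteq> j mod 11"
  define W where "W n = h_word [0, (h_fix (n div 11 + 1) + 4 - h_fix (n div 11)) mod 4]" for n
  have letter: "h_fix (n + k) = (h_fix (n div 11) + W n ! (n mod 11 + k)) mod 4"
    if "k < 6" for n k
  proof -
    have "n + k = 11 * (n div 11) + (n mod 11 + k)"
      by simp
    then show ?thesis
      using h_fix_eq_rotated_nth_h_word_pair[of "n mod 11 + k" "n div 11"] that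
      by (simp add: W_def del: h_word_Cons)
  qed
  have window: "(h_fix (i div 11) + W i ! (i mod 11 + k)) mod 4
      = (h_fix (j div 11) + W j ! (j mod 11 + k)) mod 4" if "k < 6" for k
    using letter[OF that, of i] letter[OF that, of j] assms that by metis
  have "(W i ! (i mod 11 + k) + W j ! (j mod 11)) mod 4
      = (W j ! (j mod 11 + k) + W i ! (i mod 11)) mod 4" if "k < 6" for k
    using mod_add_cross[OF window[OF that] window[of 0]] by simp
  moreover obtain k where "k < 6" and "(W i ! (i mod 11 + k) + W j ! (j mod 11)) mod 4
      \<noteq> (W j ! (j mod 11 + k) + W i ! (i mod 11)) mod 4"
    using rotated_windows_of_h_word_pairs_differ[of "(h_fix (i div 11 + 1) + 4 - h_fix (i div 11)) mod 4"
        "(h_fix (j div 11 + 1) + 4 - h_fix (j div 11)) mod 4" "i mod 11" "j mod 11"] offsets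
    unfolding W_def by (auto simp del: h_word_Cons)
  ultimately show False
    by blast
qed

lemma h_fix_three_halves_power_11_dvd:
  assumes "factor_has_period h_fix i (3 * m) (2 * m)" and "6 \<le> m"
  shows "11 dvd m"
proof -
  have "h_fix (i + k) = h_fix (i + 2 * m + k)" if "k < 6" for k
  proof -
    have "k + 2 * m < 3 * m"
      using that assms(2) by simp
    then have "h_fix (i + k) = h_fix (i + k + 2 * m)"
      using assms(1) unfolding factor_has_period_def by blast
    then show ?thesis
      by (simp only: ac_simps)
  qed
  then have "(i + 0) mod 11 = (i + 2 * m) mod 11"
    using h_fix_synchronizing by simp
  then have "0 mod 11 = (2 * m) mod 11"
    by (rule mod_add_left_cancel_nat)
  then have "11 dvd 2 * m"
    by (simp add: dvd_eq_mod_eq_0)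
  then show ?thesis
    by presburger
qed

lemma h_fix_no_three_halves_power_15: "\<not> factor_has_period h_fix i 15 10"
proof
  assume "factor_has_period h_fix i 15 10"
  then have period: "h_fix (i + k) = h_fix (i + (k + 10))" if "k < 5" for k
    using that unfolding factor_has_period_def by (simp add: add.assoc)
  define t where "t = i div 11"
  define W where "W = h_word [h_fix t, h_fix (t + 1), h_fix (t + 2)]"
  have letter: "h_fix (i + u) = W ! (i mod 11 + u)" if "u < 15" for u
  proof -
    have "h_fix (i + u) = h_fix (11 * t + (i mod 11 + u))"
      by (simp add: t_def)
    also have "\<dots> = W ! (i mod 11 + u)"
      using h_fix_eq_nth_h_word_window[of "i mod 11 + u" 3 t] that
      by (simp add: W_def upt_rec del: h_word_Cons)
    finally show ?thesis .
  qed
  obtain k where "k < 5" and "W ! (i mod 11 + k) \<noteq> W ! (i mod 11 + 10 + k)"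
    using h_word_triple_no_three_halves_power_15[of "h_fix t" "h_fix (t + 1)" "h_fix (t + 2)"
        "i mod 11", OF h_fix_less_4 h_fix_less_4 h_fix_less_4]
    unfolding W_def by (auto simp del: h_word_Cons)
  moreover have "W ! (i mod 11 + k) = W ! (i mod 11 + 10 + k)" if "k < 5" for k
    using period[OF that] letter[of k] letter[of "k + 10"] that by (simp add: ac_simps)
  ultimately show False
    by blast
qed

lemma factor_has_period_h_fix_desubstitute:
  assumes "factor_has_period h_fix i (11 * p) (11 * q)"
  shows "factor_has_period h_fix ((i + 10) div 11) p q"
  unfolding factor_has_period_def
proof (intro allI impI)
  fix j
  assume j: "j + q < p"
  define a where "a = (i + 10) div 11"
  have "i \<le> 11 * a" and "11 * a \<le> i + 10"
    unfolding a_def by linarith+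
  then have "11 * (a + j) - i + 11 * q < 11 * p"
    using j by (simp add: distrib_left)
  then have "h_fix (i + (11 * (a + j) - i)) = h_fix (i + (11 * (a + j) - i) + 11 * q)"
    using assms unfolding factor_has_period_def by blast
  moreover have "i + (11 * (a + j) - i) = 11 * (a + j)"
    using \<open>i \<le> 11 * a\<close> by simp
  ultimately have "h_fix (11 * (a + j)) = h_fix (11 * (a + j + q))"
    by (simp add: distrib_left)
  then show "h_fix (a + j) = h_fix (a + j + q)"
    by (simp only: h_fix_mult_11)
qed

lemma h_fix_three_halves_power_length:
  assumes "factor_has_period h_fix i (3 * m) (2 * m)" and "1 \<le> m"
  shows "\<exists>a \<in> {1, 2, 3, 4::nat}. \<exists>k. m = a * 11 ^ k"
  using assms
proof (induction m arbitrary: i rule: less_induct)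
  case (less m)
  consider "m \<le> 4" | "m = 5" | "6 \<le> m"
    by linarith
  then show ?case
  proof cases
    case 1
    then show ?thesis
      using less.prems(2) by (intro bexI[of _ m] exI[of _ 0]) auto
  next
    case 2
    then show ?thesis
      using less.prems(1) h_fix_no_three_halves_power_15 by simp
  next
    case 3
    then obtain M where M: "m = 11 * M"
      using h_fix_three_halves_power_11_dvd less.prems(1) by blast
    then have "factor_has_period h_fix ((i + 10) div 11) (3 * M) (2 * M)"
      using less.prems(1) factor_has_period_h_fix_desubstitute[of i "3 * M" "2 * M"]
      by (simp add: ac_simps)
    moreover have "M < m" and "1 \<le> M"
      using M less.prems(2) by auto
    ultimately obtain a k where "a \<in> {1, 2, 3, 4}" and "M = a * 11 ^ k"
      using less.IH[of M "(i + 10) div 11"] by blast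
    with M show ?thesis
      by (intro bexI[of _ a] exI[of _ "Suc k"]) auto
  qed
qed

theorem mainTheorem9:
  fixes i p q :: nat
  assumes "q \<ge> 1" and "p > q" and "2 * p = 3 * q"
    and "factor_has_period h_fix i p q"
  shows "\<exists>a \<in> {3, 6, 9, 12::nat}. \<exists>k::nat. p = a * 11 ^ k"
proof -
  have "even (3 * q)"
    using assms(3) by (metis dvd_triv_left)
  then obtain m where "q = 2 * m"
    by (auto elim: evenE)
  moreover have "p = 3 * m"
    using assms(3) calculation by simp
  ultimately have m: "q = 2 * m" "p = 3 * m"
    by simp_all
  then have "factor_has_period h_fix i (3 * m) (2 * m)" and "1 \<le> m"
    using assms(1,4) by simp_all
  then obtain a k where "a \<in> {1, 2, 3, 4}" and "m = a * 11 ^ k"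
    using h_fix_three_halves_power_length by blast
  with m show ?thesis
    by (intro bexI[of _ "3 * a"] exI[of _ k]) auto
qed

end
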